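(* Let $\mathbb{K}$ be a field with $|\mathbb{K}|>2$ and let $(X,Z,\Xi,\Theta)$ be a dual split pre-Veronese set. The following are equivalent: (i) $\Theta=\emptyset$; (ii) for every $\xi\in\Xi$, the vertex $Y\cap\xi$ of $(X\cup Y)\cap\xi$ equals $Y$; (iii) there exists $\xi\in\Xi$ whose vertex $Y\cap\xi$ equals $Y$.
   Context: Let $\mathbb{K}$ be a field. For integers $R\ge1$, $V\ge -1$, an $(R,V)$-cone is a cone with a $V$-dimensional vertex (empty if $V=-1$) over a non-degenerate hyperbolic quadric in $\mathbb{P}^{2R+1}(\mathbb{K})$; the $(R,V)$-tube is the cone minus its vertex. Let $r,v,r',v'\ge -1$ be integers with $r'>r\ge1$, $d=2r+v+1$, $d'=2r'+v'+1$. Let $X,Z$ be point sets with $X\cup Z$ spanning $\mathbb{P}^N(\mathbb{K})$, $Y:=\langle Z\rangle$; $\Xi$ a family of $(d+1)$-dimensional subspaces with $|\Xi|>1$, $\Theta$ a possibly empty family of $(d'+1)$-dimensional subspaces such that: for $\xi\in\Xi$, $(X\cup Y)\cap\xi$ is an $(r,v)$-cone with vertex $Y\cap\xi$ and $X\cap\xi$ is its tube; for $\theta\in\Theta$, $(X\cup Y)\cap\theta$ is an $(r',v')$-cone $C_\theta$, $Y\cap\theta$ is a generator $M$ of $C_\theta$, $Z\cap\theta$ is the disjoint union of the vertex $V_\theta$ and an $r'$-space of $M$ complementary to $V_\theta$, and $X\cap\theta=C_\theta\setminus M$. A subspace is singular if all its points lie in $X\cup Y$; two points are collinear if the joining line is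 singular. Axioms: (S1) any two distinct points of $X\cup Z$ lie in a common member of $\Xi\cup\Theta$; (S2) the intersection of two distinct members of $\Xi\cup\Theta$ is singular. A dual split pre-Veronese set (pre-DSV) is such a quadruple satisfying (S1) and (S2). *)

theory Defs
  imports Complex_Main "HOL-Library.Function_Algebras"
begin

text \<open>Model of P^N(K): vectors are functions nat => K vanishing above N
  (so K^(N+1)); a projective point is a 1-dimensional linear subspace;
  a projective subspace of projective dimension k is represented by the
  underlying linear subspace (of linear dimension k+1).\<close>

definition sc :: "'k::field \<Rightarrow> (nat \<Rightarrow> 'k) \<Rightarrow> (nat \<Rightarrow> 'k)" where
  "sc c x = (\<lambda>i. c * x i)"

definition amb :: "nat \<Rightarrow> (nat \<Rightarrow> 'k::field) set" where
  "amb N = {x. \<forall>i>N. x i = 0}"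

definition pts :: "nat \<Rightarrow> (nat \<Rightarrow> 'k::field) set set" where
  "pts N = {{sc c x | c. True} | x. x \<in> amb N \<and> x \<noteq> 0}"

abbreviation lsubspace :: "(nat \<Rightarrow> 'k::field) set \<Rightarrow> bool" where
  "lsubspace S \<equiv> module.subspace (sc :: 'k \<Rightarrow> _) S"

abbreviation lspan :: "(nat \<Rightarrow> 'k::field) set \<Rightarrow> (nat \<Rightarrow> 'k) set" where
  "lspan S \<equiv> module.span (sc :: 'k \<Rightarrow> _) S"

abbreviation lindep :: "(nat \<Rightarrow> 'k::field) set \<Rightarrow> bool" where
  "lindep S \<equiv> module.independent (sc :: 'k \<Rightarrow> _) S"

abbreviation ldim :: "(nat \<Rightarrow> 'k::field) set \<Rightarrow> nat" where
  "ldim S \<equiv> vector_space.dim (sc :: 'k \<Rightarrow> _) S"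

definition ptsof :: "nat \<Rightarrow> (nat \<Rightarrow> 'k::field) set \<Rightarrow> (nat \<Rightarrow> 'k) set set" where
  "ptsof N S = {p \<in> pts N. p \<subseteq> S}"

definition hypform :: "nat \<Rightarrow> (nat \<Rightarrow> 'k::field) \<Rightarrow> 'k" where
  "hypform R a = (\<Sum>k\<le>R. a (2*k) * a (2*k+1))"

text \<open>cone C N R V S W: the point set C is an (R,V)-cone in P^N, spanning the
  projective subspace with underlying linear subspace S, with vertex the
  projective subspace with underlying linear subspace W (of projective
  dimension V; W = {0}, i.e. empty vertex, when V = -1).\<close>
definition cone ::
  "nat \<Rightarrow> nat \<Rightarrow> int \<Rightarrow> (nat \<Rightarrow> 'k::field) set \<Rightarrow> (nat \<Rightarrow> 'k) set set \<Rightarrow> (nat \<Rightarrow> 'k) set \<Rightarrow> bool"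
  where
  "cone N R V S C W \<longleftrightarrow> V \<ge> -1 \<and> R \<ge> 1 \<and>
     (\<exists>f :: nat \<Rightarrow> (nat \<Rightarrow> 'k).
        let n = 2*R + 2 + nat (V+1) in
        inj_on f {..<n} \<and> f ` {..<n} \<subseteq> amb N \<and> lindep (f ` {..<n}) \<and>
        S = lspan (f ` {..<n}) \<and>
        W = lspan (f ` {2*R+2..<n}) \<and>
        C = {p \<in> pts N. \<exists>a. (\<Sum>i<n. sc (a i) (f i)) \<in> p - {0} \<and> hypform R a = 0})"

definition generator :: "nat \<Rightarrow> (nat \<Rightarrow> 'k::field) set set \<Rightarrow> (nat \<Rightarrow> 'k) set \<Rightarrow> bool" where
  "generator N C M \<longleftrightarrow> lsubspace M \<and> M \<subseteq> amb N \<and> ptsof N M \<subseteq> C \<and>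
     (\<forall>M'. lsubspace M' \<and> M \<subseteq> M' \<and> M' \<subseteq> amb N \<and> ptsof N M' \<subseteq> C \<longrightarrow> M' = M)"

text \<open>Members of Xi, Theta are given by their underlying linear
  subspaces; Y = <Z> is the linear span of the points of Z.\<close>
definition preDSV ::
  "nat \<Rightarrow> int \<Rightarrow> int \<Rightarrow> int \<Rightarrow> int \<Rightarrow> (nat \<Rightarrow> 'k::field) set set \<Rightarrow> (nat \<Rightarrow> 'k) set set
   \<Rightarrow> (nat \<Rightarrow> 'k) set set \<Rightarrow> (nat \<Rightarrow> 'k) set set \<Rightarrow> bool" where
  "preDSV N r v r' v' X Z \<Xi> \<Theta> \<longleftrightarrow>
    (let Y = lspan (\<Union>Z); XY = X \<union> ptsof N Y in
     r \<ge> 1 \<and> r' > r \<and> v \<ge> -1 \<and> v' \<ge> -1 \<and>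
     X \<subseteq> pts N \<and> Z \<subseteq> pts N \<and> lspan (\<Union>(X \<union> Z)) = amb N \<and>
     (\<exists>\<xi>1 \<in> \<Xi>. \<exists>\<xi>2 \<in> \<Xi>. \<xi>1 \<noteq> \<xi>2) \<and>
     (\<forall>\<xi>\<in>\<Xi>. cone N (nat r) v \<xi> (XY \<inter> ptsof N \<xi>) (Y \<inter> \<xi>) \<and>
              X \<inter> ptsof N \<xi> = (XY \<inter> ptsof N \<xi>) - ptsof N (Y \<inter> \<xi>)) \<and>
     (\<forall>\<theta>\<in>\<Theta>. \<exists>V U. cone N (nat r') v' \<theta> (XY \<inter> ptsof N \<theta>) V \<and>
              generator N (XY \<inter> ptsof N \<theta>) (Y \<inter> \<theta>) \<and>
              lsubspace U \<and> U \<subseteq> Y \<inter> \<theta> \<and> ldim U = nat (r' + 1) \<and>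
              U \<inter> V = {0} \<and> lspan (U \<union> V) = Y \<inter> \<theta> \<and>
              Z \<inter> ptsof N \<theta> = ptsof N V \<union> ptsof N U \<and>
              X \<inter> ptsof N \<theta> = (XY \<inter> ptsof N \<theta>) - ptsof N (Y \<inter> \<theta>)) \<and>
     \<comment> \<open>(S1)\<close>
     (\<forall>p\<in>X \<union> Z. \<forall>q\<in>X \<union> Z. p \<noteq> q \<longrightarrow> (\<exists>\<sigma>\<in>\<Xi> \<union> \<Theta>. p \<subseteq> \<sigma> \<and> q \<subseteq> \<sigma>)) \<and>
     \<comment> \<open>(S2)\<close>
     (\<forall>\<sigma>1\<in>\<Xi> \<union> \<Theta>. \<forall>\<sigma>2\<in>\<Xi> \<union> \<Theta>. \<sigma>1 \<noteq> \<sigma>2 \<longrightarrow> ptsof N (\<sigma>1 \<inter> \<sigma>2) \<subseteq> XY))"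

end

(*
  Each \<xi> \<in> \<Xi> carries a cone with vertex Y \<inter> \<xi>, and translating a cone point by a vector of
  the vertex stays on the cone.
  (i) \<Rightarrow> (ii): let \<Theta> = {} and z0 \<in> Y \<setminus> \<xi>. Take points x, y of the tube of \<xi> with x - y off
  the cone. A member of \<Xi> through x and a point of Z containing z0 has z0 in its vertex, so
  x + z0 and y + z0 are points of X; by (S1) they lie in a common \<tau> \<in> \<Xi>, \<tau> \<noteq> \<xi>, and then
  x - y \<in> \<tau> \<inter> \<xi> is singular by (S2), a contradiction.
  (ii) \<Rightarrow> (i): if Y \<subseteq> \<xi> for all \<xi>, maximality of the generator Y \<inter> \<theta> forces \<xi> \<inter> \<theta> = Y \<inter> \<theta>,
  so a tube point of some \<theta> \<in> \<Theta> and a tube point of some \<xi> \<noteq> \<theta> lie in no common member,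
  contradicting (S1).
  (iii) \<Rightarrow> (ii): all vertices Y \<inter> \<xi> have the same dimension v + 1.
*)
theory Submission
  imports Defs
begin

interpretation V: vector_space "sc :: 'k::field \<Rightarrow> (nat \<Rightarrow> 'k) \<Rightarrow> _"
  by unfold_locales (auto simp: sc_def fun_eq_iff algebra_simps)

definition pt :: "(nat \<Rightarrow> 'k::field) \<Rightarrow> (nat \<Rightarrow> 'k) set" where
  "pt x = {sc c x | c. True}"

lemma amb_subspace: "lsubspace (amb N :: (nat \<Rightarrow> 'k::field) set)"
  by (auto simp: V.subspace_def amb_def sc_def)

lemma mem_pt: "x \<in> pt x"
  unfolding pt_def by (rule CollectI, rule exI[of _ 1]) simp

lemma pt_subset_iff: "lsubspace S \<Longrightarrow> pt x \<subseteq> S \<longleftrightarrow> x \<in> S"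
  using mem_pt[of x] by (auto simp: pt_def intro: V.subspace_scale)

lemma pt_in_pts_iff: "pt x \<in> pts N \<longleftrightarrow> x \<in> amb N \<and> x \<noteq> 0"
proof
  assume "pt x \<in> pts N"
  then obtain y where y: "pt x = pt y" "y \<in> amb N" "y \<noteq> 0"
    by (auto simp: pts_def pt_def)
  then obtain c where "x = sc c y" using mem_pt[of x] by (auto simp: pt_def)
  then have "x \<in> amb N" using y(2) amb_subspace V.subspace_scale by blast
  moreover have "x \<noteq> 0"
  proof
    assume "x = 0"
    then have "pt x = {0}" by (auto simp: pt_def sc_def fun_eq_iff)
    then show False using y mem_pt[of y] by auto
  qed
  ultimately show "x \<in> amb N \<and> x \<noteq> 0" ..
qed (auto simp: pts_def pt_def)

lemma pt_in_ptsof_iff: "lsubspace S \<Longrightarrow> pt x \<in> ptsof N S \<longleftrightarrow> x \<in> S \<and> x \<in> amb N \<and> x \<noteq> 0"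
  by (auto simp: ptsof_def pt_in_pts_iff pt_subset_iff)

definition frame :: "nat \<Rightarrow> nat \<Rightarrow> (nat \<Rightarrow> nat \<Rightarrow> 'k::field) \<Rightarrow> bool" where
  "frame N n f \<longleftrightarrow> inj_on f {..<n} \<and> f ` {..<n} \<subseteq> amb N \<and> lindep (f ` {..<n})"

definition lincomb :: "nat \<Rightarrow> (nat \<Rightarrow> nat \<Rightarrow> 'k::field) \<Rightarrow> (nat \<Rightarrow> 'k) \<Rightarrow> (nat \<Rightarrow> 'k)" where
  "lincomb n f a = (\<Sum>i<n. sc (a i) (f i))"

definition quadric_pts :: "nat \<Rightarrow> nat \<Rightarrow> nat \<Rightarrow> (nat \<Rightarrow> nat \<Rightarrow> 'k::field) \<Rightarrow> (nat \<Rightarrow> 'k) set set"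
  where "quadric_pts N R n f = {p \<in> pts N. \<exists>a. lincomb n f a \<in> p - {0} \<and> hypform R a = 0}"

lemma cone_frameE:
  assumes "cone N R V S C W"
  obtains f n where "frame N n f" "R \<ge> 1" "n = 2*R + 2 + nat (V+1)"
    "S = lspan (f ` {..<n})" "W = lspan (f ` {2*R+2..<n})" "C = quadric_pts N R n f"
  using assms unfolding cone_def frame_def quadric_pts_def lincomb_def Let_def by blast

lemma lincomb_scale: "lincomb n f (\<lambda>i. c * a i) = sc c (lincomb n f a)"
  by (simp add: lincomb_def V.scale_sum_right)

lemma lincomb_add: "lincomb n f (\<lambda>i. a i + b i) = lincomb n f a + lincomb n f b"
  by (simp add: lincomb_def V.scale_left_distrib sum.distrib)

lemma lincomb_diff: "lincomb n f (\<lambda>i. a i - b i) = lincomb n f a - lincomb n f b"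
  by (simp add: lincomb_def V.scale_left_diff_distrib sum_subtractf)

lemma lincomb_unique:
  assumes "frame N n f" "lincomb n f a = lincomb n f b" "j < n"
  shows "a j = b j"
proof -
  have inj: "inj_on f {..<n}" and ind: "lindep (f ` {..<n})"
    using assms(1) by (auto simp: frame_def)
  define u where "u v = a (the_inv_into {..<n} f v) - b (the_inv_into {..<n} f v)" for v
  have "(\<Sum>v\<in>f ` {..<n}. sc (u v) v) = (\<Sum>i<n. sc (a i - b i) (f i))"
    by (simp add: sum.reindex inj u_def the_inv_into_f_f)
  also have "\<dots> = 0"
    using assms(2) lincomb_diff[of n f a b] by (simp add: lincomb_def)
  finally have "u (f j) = 0"
    using V.independentD[OF ind, of "f ` {..<n}" u "f j"] assms(3) by auto
  then show ?thesis using assms(3) by (simp add: u_def the_inv_into_f_f inj)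
qed

lemma lincomb_delta:
  assumes "j < n"
  shows "lincomb n f (\<lambda>i. if i = j then c else 0) = sc c (f j)"
proof -
  have "sc (if i = j then c else 0) (f i) = (if i = j then sc c (f j) else 0)" for i
    by (simp add: sc_def fun_eq_iff)
  then show ?thesis using assms by (simp add: lincomb_def)
qed

lemma lincomb_in_amb: "frame N n f \<Longrightarrow> lincomb n f a \<in> amb N"
  unfolding lincomb_def frame_def
  by (intro V.subspace_sum[OF amb_subspace] V.subspace_scale[OF amb_subspace]) auto

lemma hypform_cong: "(\<And>i. i < 2*R + 2 \<Longrightarrow> a i = b i) \<Longrightarrow> hypform R a = hypform R b"
  unfolding hypform_def by (intro sum.cong) auto

lemma hypform_scale: "hypform R (\<lambda>i. c * a i) = c^2 * hypform R a"
  unfolding hypform_def by (simp add: sum_distrib_left power2_eq_square algebra_simps)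

lemma span_tail_lincombE:
  assumes "frame N n f" "w \<in> lspan (f ` {m..<n})"
  obtains g where "w = lincomb n f g" "\<And>i. i < m \<Longrightarrow> g i = 0"
proof -
  have inj: "inj_on f {m..<n}" using assms(1) by (auto simp: frame_def intro: inj_on_subset)
  obtain u where "w = (\<Sum>v\<in>f ` {m..<n}. sc (u v) v)"
    using assms(2) V.span_finite[of "f ` {m..<n}"] by auto
  also have "\<dots> = (\<Sum>i\<in>{m..<n}. sc (u (f i)) (f i))" by (simp add: sum.reindex inj)
  also have "\<dots> = lincomb n f (\<lambda>i. if m \<le> i then u (f i) else 0)"
    unfolding lincomb_def by (rule sum.mono_neutral_cong_left) auto
  finally show ?thesis by (rule that) simp
qed

lemma frame_vector_notin_span_tail:
  assumes "frame N n f" "j < m" "m \<le> n"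
  shows "f j \<notin> lspan (f ` {m..<n})"
proof
  assume "f j \<in> lspan (f ` {m..<n})"
  then obtain g where g: "f j = lincomb n f g" "g j = 0"
    using span_tail_lincombE[OF assms(1)] assms(2) by metis
  have "lincomb n f (\<lambda>i. if i = j then 1 else 0) = lincomb n f g"
    using lincomb_delta[of j n f 1] assms(2,3) g(1) by simp
  moreover have "j < n" using assms(2,3) by simp
  ultimately show False using lincomb_unique[OF assms(1)] g(2) by fastforce
qed

lemma pt_lincomb_in_quadric_iff:
  assumes "frame N n f" "2*R + 2 \<le> n" "lincomb n f b \<noteq> 0"
  shows "pt (lincomb n f b) \<in> quadric_pts N R n f \<longleftrightarrow> hypform R b = 0"
proof
  assume "pt (lincomb n f b) \<in> quadric_pts N R n f"
  then obtain a c where a: "lincomb n f a = sc c (lincomb n f b)" "lincomb n f a \<noteq> 0"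
    "hypform R a = 0"
    by (auto simp: quadric_pts_def pt_def)
  then have "c \<noteq> 0" by (auto simp: sc_def fun_eq_iff)
  have "a i = c * b i" if "i < n" for i
    using lincomb_unique[OF assms(1) _ that] a(1) lincomb_scale by metis
  then have "hypform R a = c^2 * hypform R b"
    using assms(2) hypform_cong[of R a "\<lambda>i. c * b i"] hypform_scale by simp
  then show "hypform R b = 0" using a(3) \<open>c \<noteq> 0\<close> by simp
next
  assume "hypform R b = 0"
  then show "pt (lincomb n f b) \<in> quadric_pts N R n f"
    using assms mem_pt lincomb_in_amb by (auto simp: quadric_pts_def pt_in_pts_iff)
qed

lemma quadric_pt_coordsE:
  assumes "pt x \<in> quadric_pts N R n f"
  obtains b where "x = lincomb n f b" "hypform R b = 0"
proof -
  obtain a c where a: "lincomb n f a = sc c x" "lincomb n f a \<noteq> 0" "hypform R a = 0"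
    using assms by (auto simp: quadric_pts_def pt_def)
  then have "c \<noteq> 0" by (auto simp: sc_def fun_eq_iff)
  have "x = lincomb n f (\<lambda>i. inverse c * a i)"
    using a(1) \<open>c \<noteq> 0\<close> by (simp add: lincomb_scale)
  moreover have "hypform R (\<lambda>i. inverse c * a i) = 0"
    using a(3) by (simp add: hypform_scale)
  ultimately show ?thesis by (rule that)
qed

lemma cone_subspace:
  assumes "cone N R V S C W"
  shows "lsubspace S" "S \<subseteq> amb N"
proof -
  obtain f n where "frame N n f" "S = lspan (f ` {..<n})"
    using cone_frameE[OF assms] by metis
  then show "lsubspace S" "S \<subseteq> amb N"
    using V.span_minimal[OF _ amb_subspace] by (auto simp: frame_def)
qed

lemma cone_vertex_basisE:
  assumes "cone N R V S C W"
  obtains B where "finite B" "lindep B" "card B = nat (V+1)" "W = lspan B"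
proof -
  obtain f n where f: "frame N n f" "n = 2*R + 2 + nat (V+1)" "W = lspan (f ` {2*R+2..<n})"
    using cone_frameE[OF assms] by metis
  have sub: "f ` {2*R+2..<n} \<subseteq> f ` {..<n}" by auto
  have "inj_on f {2*R+2..<n}" "lindep (f ` {2*R+2..<n})"
    using f(1) V.independent_mono[OF _ sub] by (auto simp: frame_def intro: inj_on_subset)
  then show ?thesis using f(2,3) by (intro that) (auto simp: card_image)
qed

lemma hypform_delta: "hypform R (\<lambda>i. if i = j then c else 0) = 0"
  unfolding hypform_def by (intro sum.neutral) auto

lemma hypform_split_first: "hypform R a = a 0 * a 1 + (\<Sum>k<R. a (2*Suc k) * a (2*Suc k + 1))"
  unfolding hypform_def by (simp add: sum.atMost_shift)

text \<open>The witnesses are \<open>f 0\<close> and \<open>f 1\<close>: their difference has coordinates with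
  \<open>a0 a1 = -1\<close>.\<close>

lemma cone_secantE:
  assumes "cone N R V S C W"
  obtains x y where "x \<in> S - W" "y \<in> S - W" "x \<noteq> y" "pt x \<in> C" "pt y \<in> C" "pt (x - y) \<notin> C"
proof -
  obtain f n where f: "frame N n f" "n = 2*R + 2 + nat (V+1)"
    "S = lspan (f ` {..<n})" "W = lspan (f ` {2*R+2..<n})" "C = quadric_pts N R n f"
    and "R \<ge> 1"
    using cone_frameE[OF assms(1)] by metis
  have n: "2*R + 2 \<le> n" using f(2) by simp
  define e where "e j = (\<lambda>i::nat. if i = j then 1 else (0::'a))" for j
  have f_eq: "f j = lincomb n f (e j)" if "j < n" for j
    using lincomb_delta[OF that, of f 1] by (simp add: e_def)
  have notW: "f j \<notin> W" if "j < 2*R + 2" for j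
    using frame_vector_notin_span_tail[OF f(1) that n] f(4) by simp
  have nz: "f j \<noteq> 0" if "j < 2*R + 2" for j
    using notW[OF that] f(4) V.span_zero by metis
  have inC: "pt (f j) \<in> C" if "j < 2*R + 2" for j
    using pt_lincomb_in_quadric_iff[OF f(1) n, of "e j"] f_eq nz that n hypform_delta
    by (simp add: f(5) e_def)
  have "f 0 \<noteq> f 1" using f(1) n inj_onD[of f "{..<n}" 0 1] by (auto simp: frame_def)
  have diff: "f 0 - f 1 = lincomb n f (\<lambda>i. e 0 i - e 1 i)"
    using f_eq n by (simp add: lincomb_diff)
  have "hypform R (\<lambda>i. e 0 i - e 1 i) = -1"
    using \<open>R \<ge> 1\<close> by (simp add: hypform_split_first e_def)
  moreover have "lincomb n f (\<lambda>i. e 0 i - e 1 i) \<noteq> 0"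
    using diff \<open>f 0 \<noteq> f 1\<close> right_minus_eq by metis
  ultimately have "pt (f 0 - f 1) \<notin> C"
    using pt_lincomb_in_quadric_iff[OF f(1) n] diff by (simp add: f(5))
  moreover have "f j \<in> S" if "j < n" for j using f(3) that by (auto intro: V.span_base)
  ultimately show ?thesis using that[of "f 0" "f 1"] notW inC \<open>f 0 \<noteq> f 1\<close> n by simp
qed

lemma cone_add_vertex:
  assumes "cone N R V S C W" "pt x \<in> C" "w \<in> W" "x + w \<noteq> 0"
  shows "pt (x + w) \<in> C"
proof -
  obtain f n where f: "frame N n f" "n = 2*R + 2 + nat (V+1)"
    "W = lspan (f ` {2*R+2..<n})" "C = quadric_pts N R n f"
    using cone_frameE[OF assms(1)] by metis
  obtain b where b: "x = lincomb n f b" "hypform R b = 0"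
    using quadric_pt_coordsE assms(2) f(4) by metis
  obtain g where g: "w = lincomb n f g" "\<And>i. i < 2*R + 2 \<Longrightarrow> g i = 0"
    using span_tail_lincombE[OF f(1)] assms(3) f(3) by metis
  have "x + w = lincomb n f (\<lambda>i. b i + g i)" using b g by (simp add: lincomb_add)
  moreover have "hypform R (\<lambda>i. b i + g i) = 0"
    using hypform_cong[of R "\<lambda>i. b i + g i" b] g(2) b(2) by simp
  ultimately show ?thesis
    using pt_lincomb_in_quadric_iff[OF f(1)] f(2,4) assms(4) by simp
qed

lemma span_eq_if_span_subset_card_le:
  assumes "finite A" "lindep B" "card A \<le> card B" "lspan B \<subseteq> lspan A"
  shows "lspan B = lspan A"
proof -
  have "finite B"
    using V.independent_span_bound[OF assms(1,2)] assms(4) V.span_superset by blast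
  have "A \<subseteq> lspan B"
  proof
    fix a assume "a \<in> A"
    show "a \<in> lspan B"
    proof (rule ccontr)
      assume a: "a \<notin> lspan B"
      have "insert a B \<subseteq> lspan A"
        using \<open>a \<in> A\<close> assms(4) V.span_base V.span_superset by blast
      then have "card (insert a B) \<le> card A"
        using V.independent_span_bound[OF assms(1) V.independent_insertI[OF a assms(2)]] by blast
      moreover have "a \<notin> B" using a V.span_base by blast
      ultimately show False using \<open>finite B\<close> assms(3) by simp
    qed
  qed
  then show ?thesis using assms(4) V.span_minimal by blast
qed

lemma pt_add_inj:
  assumes "lsubspace S" "x \<in> S" "y \<in> S" "x \<noteq> y" "z \<notin> S"
  shows "pt (x + z) \<noteq> pt (y + z)"
proof
  assume "pt (x + z) = pt (y + z)"
  then obtain c where c: "y + z = sc c (x + z)" using mem_pt[of "y + z"] by (auto simp: pt_def)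
  show False
  proof (cases "c = 1")
    case True then show False using c assms(4) by simp
  next
    case False
    have "sc (1 - c) z = sc c x - y"
      using c by (simp add: V.scale_left_diff_distrib V.scale_right_distrib algebra_simps)
    moreover have "sc c x - y \<in> S"
      using assms(1-3) V.subspace_diff V.subspace_scale by blast
    ultimately have "sc (inverse (1 - c)) (sc (1 - c) z) \<in> S"
      using assms(1) V.subspace_scale by metis
    then show False using False assms(5) by simp
  qed
qed

locale pre_dsv =
  fixes N :: nat and r v r' v' :: int and X Z \<Xi> \<Theta> :: "(nat \<Rightarrow> 'k::field) set set"
  assumes pre_dsv: "preDSV N r v r' v' X Z \<Xi> \<Theta>"
begin

abbreviation Y :: "(nat \<Rightarrow> 'k) set" where
  "Y \<equiv> lspan (\<Union>Z)"

abbreviation XY :: "(nat \<Rightarrow> 'k) set set" where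
  "XY \<equiv> X \<union> ptsof N Y"

lemma
  shows X_pts: "X \<subseteq> pts N"
    and Xi_nontrivial: "\<exists>\<xi>1\<in>\<Xi>. \<exists>\<xi>2\<in>\<Xi>. \<xi>1 \<noteq> \<xi>2"
    and Xi_cone: "\<xi> \<in> \<Xi> \<Longrightarrow> cone N (nat r) v \<xi> (XY \<inter> ptsof N \<xi>) (Y \<inter> \<xi>)"
    and Theta_cone: "\<theta> \<in> \<Theta> \<Longrightarrow> \<exists>V. cone N (nat r') v' \<theta> (XY \<inter> ptsof N \<theta>) V"
    and Theta_generator: "\<theta> \<in> \<Theta> \<Longrightarrow> generator N (XY \<inter> ptsof N \<theta>) (Y \<inter> \<theta>)"
    and S1: "\<lbrakk>p \<in> X \<union> Z; q \<in> X \<union> Z; p \<noteq> q\<rbrakk> \<Longrightarrow> \<exists>\<sigma>\<in>\<Xi> \<union> \<Theta>. p \<subseteq> \<sigma> \<and> q \<subseteq> \<sigma>"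
    and S2: "\<lbrakk>\<sigma>1 \<in> \<Xi> \<union> \<Theta>; \<sigma>2 \<in> \<Xi> \<union> \<Theta>; \<sigma>1 \<noteq> \<sigma>2\<rbrakk> \<Longrightarrow> ptsof N (\<sigma>1 \<inter> \<sigma>2) \<subseteq> XY"
  using pre_dsv unfolding preDSV_def Let_def by meson+

lemma member_subspace: "\<sigma> \<in> \<Xi> \<union> \<Theta> \<Longrightarrow> lsubspace \<sigma> \<and> \<sigma> \<subseteq> amb N"
  using Xi_cone Theta_cone cone_subspace by blast

lemma in_X_if_notin_Y: "pt x \<in> XY \<Longrightarrow> x \<notin> Y \<Longrightarrow> pt x \<in> X"
  using mem_pt[of x] by (auto simp: ptsof_def)

lemma X_point_in_memberE:
  assumes "\<sigma> \<in> \<Xi> \<union> \<Theta>"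
  obtains x where "x \<in> \<sigma>" "x \<notin> Y" "pt x \<in> X"
proof -
  consider (Xi) "\<sigma> \<in> \<Xi>" | (Theta) "\<sigma> \<in> \<Theta>" using assms by blast
  then show ?thesis
  proof cases
    case Xi
    obtain x y where "x \<in> \<sigma> - Y \<inter> \<sigma>" "pt x \<in> XY \<inter> ptsof N \<sigma>"
      using cone_secantE[OF Xi_cone[OF Xi]] by metis
    then show ?thesis using that in_X_if_notin_Y by blast
  next
    case Theta
    obtain V where "cone N (nat r') v' \<sigma> (XY \<inter> ptsof N \<sigma>) V" using Theta_cone[OF Theta] by blast
    then obtain x y where xy: "x \<in> \<sigma> - V" "y \<in> \<sigma> - V" "x \<noteq> y"
      "pt x \<in> XY \<inter> ptsof N \<sigma>" "pt y \<in> XY \<inter> ptsof N \<sigma>" "pt (x - y) \<notin> XY \<inter> ptsof N \<sigma>"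
      by (rule cone_secantE)
    have "x \<notin> Y \<or> y \<notin> Y"
    proof (rule ccontr)
      assume "\<not> (x \<notin> Y \<or> y \<notin> Y)"
      then have "x - y \<in> Y \<inter> \<sigma>"
        using xy(1,2) member_subspace[OF assms] V.subspace_diff[OF V.subspace_span] V.subspace_diff
        by blast
      moreover have "lsubspace (Y \<inter> \<sigma>)" "\<sigma> \<subseteq> amb N"
        using member_subspace[OF assms] V.subspace_inter[OF V.subspace_span] by blast+
      ultimately have "pt (x - y) \<in> ptsof N (Y \<inter> \<sigma>)"
        using xy(3) by (auto simp: pt_in_ptsof_iff)
      then show False
        using Theta_generator[OF Theta] xy(6) by (auto simp: generator_def)
    qed
    then show ?thesis using that xy in_X_if_notin_Y by blast
  qed
qed

lemma shift_by_Z_in_X: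
  assumes "\<Theta> = {}" "pt x \<in> X" "x \<notin> Y" "z \<in> Z" "pt x \<noteq> z" "z0 \<in> z"
  shows "pt (x + z0) \<in> X"
proof -
  have "\<exists>\<sigma>\<in>\<Xi> \<union> \<Theta>. pt x \<subseteq> \<sigma> \<and> z \<subseteq> \<sigma>" using S1 assms(2,4,5) by blast
  then obtain \<sigma> where \<sigma>: "\<sigma> \<in> \<Xi>" "pt x \<subseteq> \<sigma>" "z \<subseteq> \<sigma>" using assms(1) by blast
  have "z0 \<in> Y" using assms(4,6) by (blast intro: V.span_base)
  have "x + z0 \<noteq> 0"
  proof
    assume "x + z0 = 0"
    then have "x = - z0" by (simp add: eq_neg_iff_add_eq_0)
    then show False using assms(3) V.subspace_neg[OF V.subspace_span \<open>z0 \<in> Y\<close>] by simp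
  qed
  have "x + z0 \<notin> Y"
  proof
    assume "x + z0 \<in> Y"
    then have "(x + z0) - z0 \<in> Y" using V.subspace_diff[OF V.subspace_span _ \<open>z0 \<in> Y\<close>] by blast
    then show False using assms(3) by simp
  qed
  have "pt x \<in> XY \<inter> ptsof N \<sigma>" using X_pts assms(2) \<sigma>(2) unfolding ptsof_def by blast
  moreover have "z0 \<in> Y \<inter> \<sigma>" using \<open>z0 \<in> Y\<close> \<sigma>(3) assms(6) by blast
  ultimately have "pt (x + z0) \<in> XY \<inter> ptsof N \<sigma>"
    using cone_add_vertex[OF Xi_cone[OF \<sigma>(1)]] \<open>x + z0 \<noteq> 0\<close> by blast
  then show ?thesis using in_X_if_notin_Y \<open>x + z0 \<notin> Y\<close> by blast
qed

lemma Z_vector_in_Xi_if_Theta_empty: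
  assumes "\<Theta> = {}" "\<xi> \<in> \<Xi>" "z \<in> Z" "z0 \<in> z"
  shows "z0 \<in> \<xi>"
proof (rule ccontr)
  assume "z0 \<notin> \<xi>"
  have \<xi>: "lsubspace \<xi>" "\<xi> \<subseteq> amb N" using member_subspace assms(2) by blast+
  obtain x y where xy: "x \<in> \<xi> - Y \<inter> \<xi>" "y \<in> \<xi> - Y \<inter> \<xi>" "x \<noteq> y"
    "pt x \<in> XY \<inter> ptsof N \<xi>" "pt y \<in> XY \<inter> ptsof N \<xi>" "pt (x - y) \<notin> XY \<inter> ptsof N \<xi>"
    by (rule cone_secantE[OF Xi_cone[OF assms(2)]])
  have shifted: "pt (u + z0) \<in> X" if u: "u \<in> \<xi> - Y \<inter> \<xi>" "pt u \<in> XY" for u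
  proof -
    have "pt u \<subseteq> \<xi>" using u(1) pt_subset_iff[OF \<xi>(1)] by blast
    then have "pt u \<noteq> z" using assms(4) \<open>z0 \<notin> \<xi>\<close> by blast
    moreover have "u \<notin> Y" using u(1) by blast
    ultimately show ?thesis
      using shift_by_Z_in_X[OF assms(1) _ _ assms(3) _ assms(4)] in_X_if_notin_Y[OF u(2)] by blast
  qed
  have "pt (x + z0) \<noteq> pt (y + z0)" using pt_add_inj[OF \<xi>(1)] xy(1-3) \<open>z0 \<notin> \<xi>\<close> by blast
  then have "\<exists>\<tau>\<in>\<Xi> \<union> \<Theta>. pt (x + z0) \<subseteq> \<tau> \<and> pt (y + z0) \<subseteq> \<tau>"
    using S1 shifted xy(1,2,4,5) by blast
  then obtain \<tau> where \<tau>: "\<tau> \<in> \<Xi>" "x + z0 \<in> \<tau>" "y + z0 \<in> \<tau>"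
    using assms(1) mem_pt by blast
  have \<tau>_sub: "lsubspace \<tau>" using member_subspace \<tau>(1) by blast
  have "\<tau> \<noteq> \<xi>"
  proof
    assume "\<tau> = \<xi>"
    then have "(x + z0) - x \<in> \<xi>" using \<tau>(2) xy(1) V.subspace_diff[OF \<xi>(1)] by blast
    then show False using \<open>z0 \<notin> \<xi>\<close> by simp
  qed
  have "(x + z0) - (y + z0) \<in> \<tau>" using \<tau>(2,3) V.subspace_diff[OF \<tau>_sub] by blast
  moreover have "x - y \<in> \<xi>" using xy(1,2) V.subspace_diff[OF \<xi>(1)] by blast
  ultimately have "pt (x - y) \<in> ptsof N (\<tau> \<inter> \<xi>)"
    using pt_in_ptsof_iff[OF V.subspace_inter[OF \<tau>_sub \<xi>(1)]] \<xi>(2) xy(3) by auto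
  then have "pt (x - y) \<in> XY \<inter> ptsof N \<xi>"
    using S2[of \<tau> \<xi>] \<tau>(1) assms(2) \<open>\<tau> \<noteq> \<xi>\<close> by (auto simp: ptsof_def)
  then show False using xy(6) by contradiction
qed

lemma Y_subset_Xi_if_Theta_empty:
  assumes "\<Theta> = {}" "\<xi> \<in> \<Xi>"
  shows "Y \<subseteq> \<xi>"
proof -
  have "\<Union>Z \<subseteq> \<xi>" using Z_vector_in_Xi_if_Theta_empty[OF assms] by blast
  then show ?thesis using V.span_minimal member_subspace assms(2) by blast
qed

lemma Xi_inter_Theta_eq:
  assumes "\<xi> \<in> \<Xi>" "\<theta> \<in> \<Theta>" "\<xi> \<noteq> \<theta>" "Y \<subseteq> \<xi>"
  shows "\<xi> \<inter> \<theta> = Y \<inter> \<theta>"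
proof -
  have "lsubspace (\<xi> \<inter> \<theta>)" "\<xi> \<inter> \<theta> \<subseteq> amb N"
    using member_subspace assms(1,2) V.subspace_inter by blast+
  moreover have "ptsof N (\<xi> \<inter> \<theta>) \<subseteq> XY \<inter> ptsof N \<theta>"
    using S2[of \<xi> \<theta>] assms(1-3) by (auto simp: ptsof_def)
  moreover have "Y \<inter> \<theta> \<subseteq> \<xi> \<inter> \<theta>" using assms(4) by blast
  ultimately show ?thesis
    using Theta_generator[OF assms(2)] unfolding generator_def by (elim conjE allE impE) auto
qed

lemma Theta_empty_if_Y_subset_Xi:
  assumes "\<forall>\<xi>\<in>\<Xi>. Y \<subseteq> \<xi>"
  shows "\<Theta> = {}"
proof (rule ccontr)
  assume "\<Theta> \<noteq> {}"
  then obtain \<theta> where \<theta>: "\<theta> \<in> \<Theta>" by blast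
  obtain \<xi> where \<xi>: "\<xi> \<in> \<Xi>" "\<xi> \<noteq> \<theta>" using Xi_nontrivial by blast
  obtain x where x: "x \<in> \<theta>" "x \<notin> Y" "pt x \<in> X" using X_point_in_memberE \<theta> by blast
  obtain y where y: "y \<in> \<xi>" "y \<notin> Y" "pt y \<in> X" using X_point_in_memberE \<xi>(1) by blast
  have x_only: "\<not> pt x \<subseteq> \<sigma>" if "\<sigma> \<in> \<Xi>" "\<sigma> \<noteq> \<theta>" for \<sigma>
  proof
    assume "pt x \<subseteq> \<sigma>"
    then have "x \<in> \<sigma> \<inter> \<theta>" using mem_pt x(1) by blast
    then show False
      using Xi_inter_Theta_eq[OF that(1) \<theta> that(2) assms[rule_format, OF that(1)]] x(2) by blast
  qed
  have y_only: "\<not> pt y \<subseteq> \<sigma>" if "\<sigma> \<in> \<Theta>" "\<sigma> \<noteq> \<xi>" for \<sigma>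
  proof
    assume "pt y \<subseteq> \<sigma>"
    then have "y \<in> \<xi> \<inter> \<sigma>" using mem_pt y(1) by blast
    then show False
      using Xi_inter_Theta_eq[OF \<xi>(1) that(1) that(2)[symmetric] assms[rule_format, OF \<xi>(1)]] y(2)
      by blast
  qed
  have "pt y \<subseteq> \<xi>" using y(1) pt_subset_iff member_subspace \<xi>(1) by blast
  then have "pt x \<noteq> pt y" using x_only[OF \<xi>] by metis
  then obtain \<sigma> where "\<sigma> \<in> \<Xi> \<union> \<Theta>" "pt x \<subseteq> \<sigma>" "pt y \<subseteq> \<sigma>" using S1 x(3) y(3) by blast
  then show False using x_only y_only \<theta> \<xi> by blast
qed

lemma Y_subset_Xi_if_Y_subset:
  assumes "\<xi>0 \<in> \<Xi>" "Y \<subseteq> \<xi>0" "\<xi> \<in> \<Xi>"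
  shows "Y \<subseteq> \<xi>"
proof -
  obtain A where A: "finite A" "card A = nat (v+1)" "Y \<inter> \<xi>0 = lspan A"
    using cone_vertex_basisE[OF Xi_cone[OF assms(1)]] by metis
  obtain B where B: "lindep B" "card B = nat (v+1)" "Y \<inter> \<xi> = lspan B"
    using cone_vertex_basisE[OF Xi_cone[OF assms(3)]] by metis
  have "lspan A = Y" using A(3) assms(2) by blast
  then have "lspan B \<subseteq> lspan A" using B(3) by blast
  then have "lspan B = lspan A"
    using span_eq_if_span_subset_card_le[OF A(1) B(1)] A(2) B(2) by simp
  then show ?thesis using B(3) \<open>lspan A = Y\<close> by blast
qed

end

theorem lemma4p16:
  fixes X Z \<Xi> \<Theta> :: "(nat \<Rightarrow> 'k::field) set set"
    and N :: nat and r v r' v' :: int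
  assumes "infinite (UNIV :: 'k set) \<or> card (UNIV :: 'k set) > 2"
    and "preDSV N r v r' v' X Z \<Xi> \<Theta>"
  defines "Y \<equiv> lspan (\<Union>Z)"
  shows "(\<Theta> = {} \<longleftrightarrow> (\<forall>\<xi>\<in>\<Xi>. Y \<inter> \<xi> = Y)) \<and>
         ((\<forall>\<xi>\<in>\<Xi>. Y \<inter> \<xi> = Y) \<longleftrightarrow> (\<exists>\<xi>\<in>\<Xi>. Y \<inter> \<xi> = Y))"
proof -
  interpret pre_dsv N r v r' v' X Z \<Xi> \<Theta> by (rule pre_dsv.intro) (rule assms(2))
  have "\<Theta> = {} \<longleftrightarrow> (\<forall>\<xi>\<in>\<Xi>. Y \<subseteq> \<xi>)"
    unfolding Y_def using Y_subset_Xi_if_Theta_empty Theta_empty_if_Y_subset_Xi by blast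
  moreover have "(\<forall>\<xi>\<in>\<Xi>. Y \<subseteq> \<xi>) \<longleftrightarrow> (\<exists>\<xi>\<in>\<Xi>. Y \<subseteq> \<xi>)"
    unfolding Y_def using Xi_nontrivial Y_subset_Xi_if_Y_subset by blast
  moreover have "Y \<inter> \<xi> = Y \<longleftrightarrow> Y \<subseteq> \<xi>" for \<xi> by blast
  ultimately show ?thesis by simp
qed

end
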